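(* Let $r\ge2$. If $\ell\in\mathcal M^1(\mathcal R_r)$ satisfies $\ell^r\ge\log 3$, then $\min\{\ell^i: i\in[r-1]\}\le\log(4r-5)$.
   Context: $\mathcal R_r$ is the rose with one vertex and $r$ loop edges identified with $[r]=\{1,\dots,r\}$; a length function is $\ell=(\ell^1,\dots,\ell^r)\in\mathbb R^r_{>0}$. The entropy is $\mathfrak h_{\mathcal R_r}(\ell)=\lim_{t\to\infty}\frac1t\log\#\{\gamma:\ell(\gamma)\le t\}$ over based circuits $\gamma$ (cyclically reduced closed edge paths in the oriented petals), and $\mathcal M^1(\mathcal R_r)=\{\ell:\mathfrak h_{\mathcal R_r}(\ell)=1\}$. *)

theory Defs
  imports Complex_Main
begin

text \<open>Oriented edges of the rose R_r: a petal index i together with an orientation.\<close>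
type_synonym oedge = "nat \<times> bool"

definition oinv :: "oedge \<Rightarrow> oedge" where
  "oinv e = (fst e, \<not> snd e)"

text \<open>Based circuits of R_r: nonempty, reduced and cyclically reduced words in the
  oriented petals 1..r.\<close>
definition based_circuit :: "nat \<Rightarrow> oedge list \<Rightarrow> bool" where
  "based_circuit r w \<longleftrightarrow>
     w \<noteq> [] \<and> set w \<subseteq> {1..r} \<times> UNIV \<and>
     (\<forall>k. Suc k < length w \<longrightarrow> w ! Suc k \<noteq> oinv (w ! k)) \<and>
     last w \<noteq> oinv (hd w)"

definition circuit_length :: "(nat \<Rightarrow> real) \<Rightarrow> oedge list \<Rightarrow> real" where
  "circuit_length l w = sum_list (map (\<lambda>e. l (fst e)) w)"

definition circuit_count :: "nat \<Rightarrow> (nat \<Rightarrow> real) \<Rightarrow> real \<Rightarrow> nat" where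
  "circuit_count r l t = card {w. based_circuit r w \<and> circuit_length l w \<le> t}"

text \<open>Normalized length functions M^1(R_r): positive lengths on petals 1..r whose
  entropy, the limit of (1/t) log #{gamma : l(gamma) <= t} as t goes to infinity, equals 1.\<close>
definition in_M1 :: "nat \<Rightarrow> (nat \<Rightarrow> real) \<Rightarrow> bool" where
  "in_M1 r l \<longleftrightarrow> (\<forall>i\<in>{1..r}. 0 < l i) \<and>
     ((\<lambda>t. ln (real (circuit_count r l t)) / t) \<longlongrightarrow> 1) at_top"

end

(* With x_i = exp (- s * l i), suppose sum_i x_i / (1 + x_i) <= 1/2. By induction on the length,
   the reduced words starting with the oriented petal e have total weight sum exp (- s * l(w))
   at most 2 x_e / (1 + x_e), so the reduced words of each positive length weigh at most 2.
   Every circuit of length at most t has weight at least exp (- s * t) and at most t / min l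
   letters, hence #{gamma : l(gamma) <= t} <= (1 + 2 t / min l) exp (s t) and the entropy is at
   most s. If min {l i : i < r} > log (4r - 5) and l r >= log 3, then at s = 1 the sum is below
   (r - 1) / (4r - 4) + 1/4 = 1/2, so by continuity some s < 1 qualifies, contradicting
   entropy 1. *)
theory Submission
  imports Defs
begin

definition petal_edges :: "nat \<Rightarrow> oedge set" where
  "petal_edges r = {1..r} \<times> UNIV"

definition reduced_word :: "nat \<Rightarrow> oedge list \<Rightarrow> bool" where
  "reduced_word r w \<longleftrightarrow>
     set w \<subseteq> petal_edges r \<and> (\<forall>k. Suc k < length w \<longrightarrow> w ! Suc k \<noteq> oinv (w ! k))"

definition petal_words :: "nat \<Rightarrow> nat \<Rightarrow> oedge list set" where
  "petal_words r n = {w. set w \<subseteq> petal_edges r \<and> length w = n}"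

definition word_weight :: "real \<Rightarrow> (nat \<Rightarrow> real) \<Rightarrow> oedge list \<Rightarrow> real" where
  "word_weight s l w = exp (- s * circuit_length l w)"

definition reduced_weight :: "nat \<Rightarrow> real \<Rightarrow> (nat \<Rightarrow> real) \<Rightarrow> nat \<Rightarrow> real" where
  "reduced_weight r s l n = (\<Sum>w\<in>petal_words r n. if reduced_word r w then word_weight s l w else 0)"

definition reduced_weight_from :: "nat \<Rightarrow> real \<Rightarrow> (nat \<Rightarrow> real) \<Rightarrow> nat \<Rightarrow> oedge \<Rightarrow> real" where
  "reduced_weight_from r s l n e =
     (\<Sum>w\<in>petal_words r n. if reduced_word r (e # w) then word_weight s l (e # w) else 0)"

definition petal_ratio :: "real \<Rightarrow> (nat \<Rightarrow> real) \<Rightarrow> nat \<Rightarrow> real" where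
  "petal_ratio s l i = exp (- s * l i) / (1 + exp (- s * l i))"

definition petal_ratio_sum :: "nat \<Rightarrow> (nat \<Rightarrow> real) \<Rightarrow> real \<Rightarrow> real" where
  "petal_ratio_sum r l s = (\<Sum>i\<in>{1..r}. petal_ratio s l i)"

lemma finite_petal_edges [simp]: "finite (petal_edges r)"
  by (simp add: petal_edges_def)

lemma fst_oinv [simp]: "fst (oinv e) = fst e"
  by (simp add: oinv_def)

lemma oinv_in_petal_edges: "e \<in> petal_edges r \<Longrightarrow> oinv e \<in> petal_edges r"
  by (auto simp: petal_edges_def oinv_def)

lemma sum_petal_edges:
  fixes g :: "nat \<Rightarrow> 'a :: comm_semiring_1"
  shows "(\<Sum>a\<in>petal_edges r. g (fst a)) = 2 * (\<Sum>i\<in>{1..r}. g i)"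
proof -
  have "(\<Sum>a\<in>petal_edges r. g (fst a)) = (\<Sum>i\<in>{1..r}. \<Sum>b\<in>(UNIV :: bool set). g i)"
    unfolding petal_edges_def by (simp only: sum.cartesian_product case_prod_unfold)
  then show ?thesis by (simp add: UNIV_bool mult_2 sum.distrib)
qed

lemma reduced_word_Nil [simp]: "reduced_word r []"
  by (simp add: reduced_word_def)

lemma reduced_word_Cons:
  "reduced_word r (a # w) \<longleftrightarrow>
     a \<in> petal_edges r \<and> reduced_word r w \<and> (w \<noteq> [] \<longrightarrow> hd w \<noteq> oinv a)"
  unfolding reduced_word_def by (cases w) (auto simp: All_less_Suc2 nth_Cons' split: if_splits)

lemma based_circuit_imp_reduced_word: "based_circuit r w \<Longrightarrow> reduced_word r w"
  by (simp add: based_circuit_def reduced_word_def petal_edges_def)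

lemma finite_petal_words: "finite (petal_words r n)"
  unfolding petal_words_def by (rule finite_lists_length_eq) simp

lemma petal_words_0: "petal_words r 0 = {[]}"
  by (auto simp: petal_words_def)

lemma sum_petal_words_Suc:
  "(\<Sum>w\<in>petal_words r (Suc n). f w) = (\<Sum>a\<in>petal_edges r. \<Sum>w\<in>petal_words r n. f (a # w))"
proof -
  have "petal_words r (Suc n) = (\<lambda>(w, a). a # w) ` (petal_words r n \<times> petal_edges r)"
    unfolding petal_words_def by (rule lists_length_Suc_eq)
  moreover have "inj_on (\<lambda>(w, a). a # w) (petal_words r n \<times> petal_edges r)"
    by (auto simp: inj_on_def)
  ultimately have "(\<Sum>w\<in>petal_words r (Suc n). f w) = (\<Sum>w\<in>petal_words r n. \<Sum>a\<in>petal_edges r. f (a # w))"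
    by (simp add: sum.reindex sum.cartesian_product case_prod_unfold)
  then show ?thesis by (simp add: sum.swap[of _ "petal_words r n"])
qed

lemma word_weight_Cons: "word_weight s l (a # w) = exp (- s * l (fst a)) * word_weight s l w"
  by (simp add: word_weight_def circuit_length_def algebra_simps exp_add[symmetric])

lemma reduced_weight_from_0:
  "e \<in> petal_edges r \<Longrightarrow> reduced_weight_from r s l 0 e = exp (- s * l (fst e))"
  by (simp add: reduced_weight_from_def petal_words_0 reduced_word_Cons word_weight_def circuit_length_def)

lemma reduced_weight_from_Suc:
  assumes "e \<in> petal_edges r"
  shows "reduced_weight_from r s l (Suc n) e =
    exp (- s * l (fst e)) * (\<Sum>a\<in>petal_edges r - {oinv e}. reduced_weight_from r s l n a)"
proof -
  have "reduced_weight_from r s l (Suc n) e =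
      (\<Sum>a\<in>petal_edges r. exp (- s * l (fst e)) * (if a = oinv e then 0 else reduced_weight_from r s l n a))"
    unfolding reduced_weight_from_def sum_petal_words_Suc using assms
    by (intro sum.cong refl)
      (auto simp: reduced_word_Cons[of r e] word_weight_Cons[of s l e] sum_distrib_left intro!: sum.cong)
  also have "\<dots> = exp (- s * l (fst e)) * (\<Sum>a\<in>petal_edges r - {oinv e}. reduced_weight_from r s l n a)"
    by (simp add: sum_distrib_left[symmetric] sum.If_cases Diff_eq Int_commute)
  finally show ?thesis .
qed

lemma petal_ratio_nonneg: "0 \<le> petal_ratio s l i"
  by (simp add: petal_ratio_def add_pos_pos less_imp_le)

lemma petal_ratio_le_sum: "i \<in> {1..r} \<Longrightarrow> petal_ratio s l i \<le> petal_ratio_sum r l s"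
  unfolding petal_ratio_sum_def by (rule member_le_sum) (auto simp: petal_ratio_nonneg)

(* 2 x/(1+x) is a fixed point of the recursion of reduced_weight_from_Suc:
   x * (2 - 2 x/(1+x)) = 2 x/(1+x). *)
lemma reduced_weight_from_le:
  assumes ratio: "petal_ratio_sum r l s \<le> 1/2" and "e \<in> petal_edges r"
  shows "reduced_weight_from r s l n e \<le> 2 * petal_ratio s l (fst e)"
  using \<open>e \<in> petal_edges r\<close>
proof (induction n arbitrary: e)
  case 0
  have "petal_ratio s l (fst e) \<le> 1/2"
    using petal_ratio_le_sum[of "fst e" r s l] ratio 0 by (auto simp: petal_edges_def)
  then have "exp (- s * l (fst e)) \<le> 1"
    by (simp add: petal_ratio_def field_simps add_pos_pos)
  then show ?case
    using 0 by (simp add: reduced_weight_from_0 petal_ratio_def field_simps add_pos_pos)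
next
  case (Suc n)
  let ?x = "exp (- s * l (fst e))"
  have "(\<Sum>a\<in>petal_edges r - {oinv e}. reduced_weight_from r s l n a)
      \<le> (\<Sum>a\<in>petal_edges r - {oinv e}. 2 * petal_ratio s l (fst a))"
    using Suc.IH by (intro sum_mono) auto
  also have "\<dots> = (\<Sum>a\<in>petal_edges r. 2 * petal_ratio s l (fst a)) - 2 * petal_ratio s l (fst e)"
    using sum_diff1[of "petal_edges r" "\<lambda>a. 2 * petal_ratio s l (fst a)" "oinv e"]
      oinv_in_petal_edges[OF Suc.prems] by simp
  also have "\<dots> = 4 * petal_ratio_sum r l s - 2 * petal_ratio s l (fst e)"
    by (simp add: sum_petal_edges[of "\<lambda>i. 2 * petal_ratio s l i"] petal_ratio_sum_def sum_distrib_left)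
  also have "\<dots> \<le> 2 - 2 * petal_ratio s l (fst e)"
    using ratio by simp
  finally have "reduced_weight_from r s l (Suc n) e \<le> ?x * (2 - 2 * petal_ratio s l (fst e))"
    using reduced_weight_from_Suc[OF Suc.prems] by (simp add: mult_left_mono)
  also have "\<dots> = 2 * petal_ratio s l (fst e)"
    using add_pos_pos[OF zero_less_one exp_gt_zero[of "- s * l (fst e)"]]
    by (simp add: petal_ratio_def field_simps)
  finally show ?case .
qed

lemma reduced_weight_0: "reduced_weight r s l 0 = 1"
  by (simp add: reduced_weight_def petal_words_0 word_weight_def circuit_length_def)

lemma reduced_weight_Suc_le:
  assumes "petal_ratio_sum r l s \<le> 1/2"
  shows "reduced_weight r s l (Suc n) \<le> 2"
proof -
  have "reduced_weight r s l (Suc n) = (\<Sum>a\<in>petal_edges r. reduced_weight_from r s l n a)"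
    unfolding reduced_weight_def reduced_weight_from_def by (rule sum_petal_words_Suc)
  also have "\<dots> \<le> (\<Sum>a\<in>petal_edges r. 2 * petal_ratio s l (fst a))"
    by (intro sum_mono reduced_weight_from_le[OF assms])
  also have "\<dots> = 4 * petal_ratio_sum r l s"
    by (simp add: sum_petal_edges[of "\<lambda>i. 2 * petal_ratio s l i"] petal_ratio_sum_def sum_distrib_left)
  finally show ?thesis using assms by simp
qed

lemma sum_reduced_weight_le:
  assumes "petal_ratio_sum r l s \<le> 1/2"
  shows "(\<Sum>n\<le>K. reduced_weight r s l n) \<le> 1 + 2 * real K"
proof (induction K)
  case (Suc K)
  then show ?case using reduced_weight_Suc_le[OF assms, of K] by simp
qed (simp add: reduced_weight_0)

lemma length_mult_le_circuit_length:
  assumes "set w \<subseteq> petal_edges r" "\<forall>i\<in>{1..r}. m \<le> l i"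
  shows "real (length w) * m \<le> circuit_length l w"
  using assms by (induction w) (auto simp: circuit_length_def petal_edges_def algebra_simps)

lemma circuit_count_le:
  assumes s: "0 \<le> s" "petal_ratio_sum r l s \<le> 1/2"
    and m: "0 < m" "\<forall>i\<in>{1..r}. m \<le> l i" and "0 \<le> t"
  shows "real (circuit_count r l t) \<le> (1 + 2 * t / m) * exp (s * t)"
proof -
  define K where "K = nat \<lfloor>t / m\<rfloor>"
  have K: "real K \<le> t / m" using \<open>0 \<le> t\<close> m(1) by (simp add: K_def)
  define S where "S = {w. based_circuit r w \<and> circuit_length l w \<le> t}"
  define g where "g = (\<lambda>w. if reduced_word r w then word_weight s l w else 0)"
  have S_subset: "S \<subseteq> (\<Union>n\<le>K. petal_words r n)"
  proof
    fix w assume "w \<in> S"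
    then have w: "based_circuit r w" "circuit_length l w \<le> t" by (auto simp: S_def)
    then have "set w \<subseteq> petal_edges r" by (simp add: based_circuit_def petal_edges_def)
    moreover from this have "real (length w) * m \<le> t"
      using length_mult_le_circuit_length[OF _ m(2)] w(2) by fastforce
    then have "length w \<le> K"
      using m(1) by (simp add: K_def le_nat_floor field_simps)
    ultimately show "w \<in> (\<Union>n\<le>K. petal_words r n)" by (auto simp: petal_words_def)
  qed
  have "real (card S) = (\<Sum>w\<in>S. 1)" by simp
  also have "\<dots> \<le> (\<Sum>w\<in>S. exp (s * t) * g w)"
  proof (rule sum_mono)
    fix w assume "w \<in> S"
    then have "reduced_word r w" "- s * circuit_length l w \<ge> - s * t"
      using s(1) by (auto simp: S_def based_circuit_imp_reduced_word mult_left_mono)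
    then show "1 \<le> exp (s * t) * g w"
      by (simp add: g_def word_weight_def exp_add[symmetric])
  qed
  also have "\<dots> \<le> exp (s * t) * (\<Sum>w\<in>(\<Union>n\<le>K. petal_words r n). g w)"
    unfolding sum_distrib_left
    by (rule sum_mono2[OF _ S_subset]) (auto simp: finite_petal_words g_def word_weight_def)
  also have "(\<Sum>w\<in>(\<Union>n\<le>K. petal_words r n). g w) = (\<Sum>n\<le>K. reduced_weight r s l n)"
    unfolding reduced_weight_def g_def
    by (rule sum.UNION_disjoint) (simp_all add: finite_petal_words, auto simp: petal_words_def)
  also have "exp (s * t) * \<dots> \<le> exp (s * t) * (1 + 2 * real K)"
    using sum_reduced_weight_le[OF s(2)] by simp
  also have "\<dots> \<le> exp (s * t) * (1 + 2 * t / m)"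
    using K by simp
  finally show ?thesis by (simp add: circuit_count_def S_def mult.commute)
qed

lemma ln_one_plus_linear_over_tendsto_0:
  fixes a :: real
  assumes "0 < a"
  shows "((\<lambda>t. ln (1 + a * t) / t) \<longlongrightarrow> 0) at_top"
proof (rule tendsto_sandwich[of "\<lambda>_. 0" _ _ "\<lambda>t. ln (1 + a) / t + ln t / t"])
  show "eventually (\<lambda>t. 0 \<le> ln (1 + a * t) / t) at_top"
    using eventually_ge_at_top[of 0]
    by eventually_elim (use assms in \<open>auto intro!: divide_nonneg_nonneg ln_ge_zero\<close>)
  show "eventually (\<lambda>t. ln (1 + a * t) / t \<le> ln (1 + a) / t + ln t / t) at_top"
    using eventually_ge_at_top[of 1]
  proof eventually_elim
    case (elim t)
    have "ln (1 + a * t) \<le> ln ((1 + a) * t)"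
      using elim assms by (simp add: algebra_simps add_pos_nonneg)
    also have "\<dots> = ln (1 + a) + ln t"
      using elim assms by (simp add: ln_mult)
    finally show ?case
      using elim by (simp add: add_divide_distrib[symmetric] divide_right_mono)
  qed
  show "((\<lambda>t. ln (1 + a) / t + ln t / t) \<longlongrightarrow> 0) at_top"
    using tendsto_add[OF tendsto_divide_0[OF tendsto_const] ln_x_over_x_tendsto_0]
    by (simp add: filterlim_at_top_imp_at_infinity filterlim_ident)
qed simp

lemma circuit_entropy_le:
  assumes lpos: "\<forall>i\<in>{1..r}. 0 < l i" and s: "0 \<le> s" "petal_ratio_sum r l s \<le> 1/2"
    and entropy: "((\<lambda>t. ln (real (circuit_count r l t)) / t) \<longlongrightarrow> h) at_top"
  shows "h \<le> s"
proof -
  obtain m where m: "0 < m" "\<forall>i\<in>{1..r}. m \<le> l i"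
  proof
    show "0 < Min (insert 1 (l ` {1..r}))" using lpos by auto
    show "\<forall>i\<in>{1..r}. Min (insert 1 (l ` {1..r})) \<le> l i" by (intro ballI Min_le) auto
  qed
  have "eventually (\<lambda>t. ln (real (circuit_count r l t)) / t \<le> s + ln (1 + 2 * t / m) / t) at_top"
    using eventually_gt_at_top[of 0]
  proof eventually_elim
    case (elim t)
    have pos: "0 < 1 + 2 * t / m" using elim m(1) by (simp add: add_pos_nonneg)
    have "ln (real (circuit_count r l t)) \<le> ln ((1 + 2 * t / m) * exp (s * t))"
    proof (cases "circuit_count r l t = 0")
      case True
      have "1 * 1 \<le> (1 + 2 * t / m) * exp (s * t)"
        using elim s(1) m(1) by (intro mult_mono) auto
      then show ?thesis using True by simp
    next
      case False
      then show ?thesis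
        using circuit_count_le[OF s m] elim pos by simp
    qed
    also have "\<dots> = ln (1 + 2 * t / m) + s * t"
      using pos by (simp add: ln_mult)
    finally show ?case
      using elim by (simp add: field_simps)
  qed
  moreover have "((\<lambda>t. s + ln (1 + 2 / m * t) / t) \<longlongrightarrow> s + 0) at_top"
    using m(1) by (intro tendsto_add tendsto_const ln_one_plus_linear_over_tendsto_0) simp
  ultimately show "h \<le> s"
    using entropy by (intro tendsto_le[OF trivial_limit_at_top_linorder]) auto
qed

lemma in_M1_petal_ratio_sum_ge:
  assumes "in_M1 r l"
  shows "1/2 \<le> petal_ratio_sum r l 1"
proof (rule ccontr)
  assume "\<not> 1/2 \<le> petal_ratio_sum r l 1"
  then have below: "petal_ratio_sum r l 1 < 1/2" by simp
  have "isCont (petal_ratio_sum r l) 1"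
    unfolding petal_ratio_sum_def petal_ratio_def
    by (intro continuous_intros) (simp add: add_pos_pos less_imp_neq[symmetric])
  then have "(petal_ratio_sum r l \<longlongrightarrow> petal_ratio_sum r l 1) (at_left 1)"
    unfolding isCont_def by (rule tendsto_mono[OF at_le[OF subset_UNIV]])
  from order_tendstoD(2)[OF this below]
  have "eventually (\<lambda>s. s \<in> {0<..<1} \<and> petal_ratio_sum r l s < 1/2) (at_left 1)"
    by (rule eventually_conj[OF eventually_at_left_real, rotated]) simp
  then obtain s where s: "0 < s" "s < 1" "petal_ratio_sum r l s < 1/2"
    using eventually_happens'[OF trivial_limit_at_left_real] by auto
  have "\<forall>i\<in>{1..r}. 0 < l i" and "((\<lambda>t. ln (real (circuit_count r l t)) / t) \<longlongrightarrow> 1) at_top"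
    using assms by (auto simp: in_M1_def)
  with s show False
    using circuit_entropy_le[of r l s 1] by simp
qed

lemma petal_ratio_eq: "petal_ratio s l i = 1 / (1 + exp (s * l i))"
  by (simp add: petal_ratio_def exp_minus field_simps add_pos_pos)

lemma petal_ratio_sum_lt_half:
  assumes r: "2 \<le> r" and short: "\<forall>i\<in>{1..r-1}. ln (4 * real r - 5) < l i"
    and last: "ln 3 \<le> l r"
  shows "petal_ratio_sum r l 1 < 1/2"
proof -
  have "{1..r} = insert r {1..r-1}"
    using r by auto
  then have split: "petal_ratio_sum r l 1 = petal_ratio 1 l r + (\<Sum>i\<in>{1..r-1}. petal_ratio 1 l i)"
    unfolding petal_ratio_sum_def using r by simp
  have "petal_ratio 1 l i < 1 / (4 * real r - 4)" if "i \<in> {1..r-1}" for i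
  proof -
    have "exp (ln (4 * real r - 5)) < exp (l i)"
      using short that by simp
    then have "4 * real r - 5 < exp (l i)"
      using r by simp
    then show ?thesis using r by (simp add: petal_ratio_eq field_simps)
  qed
  then have "(\<Sum>i\<in>{1..r-1}. petal_ratio 1 l i) < (\<Sum>i\<in>{1..r-1}. 1 / (4 * real r - 4))"
    using r by (intro sum_strict_mono) auto
  also have "\<dots> = 1/4"
    using r by (simp add: of_nat_diff field_simps)
  finally have "(\<Sum>i\<in>{1..r-1}. petal_ratio 1 l i) < 1/4" .
  moreover have "petal_ratio 1 l r \<le> 1/4"
    using exp_mono[OF last] by (simp add: petal_ratio_eq field_simps)
  ultimately show ?thesis using split by linarith
qed

theorem mainTheorem15:
  fixes r :: nat and l :: "nat \<Rightarrow> real"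
  assumes "r \<ge> 2"
    and "in_M1 r l"
    and "l r \<ge> ln 3"
  shows "Min (l ` {1..r-1}) \<le> ln (4 * real r - 5)"
proof (rule ccontr)
  assume "\<not> ?thesis"
  moreover have "{1..r-1} \<noteq> {}"
    using assms(1) by simp
  ultimately have "\<forall>i\<in>{1..r-1}. ln (4 * real r - 5) < l i"
    by (simp add: not_le Min_gr_iff)
  with assms(1,3) have "petal_ratio_sum r l 1 < 1/2"
    by (blast intro: petal_ratio_sum_lt_half)
  with in_M1_petal_ratio_sum_ge[OF assms(2)] show False by simp
qed

end
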